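(* Let $\mathbb{T}=\mathbb{R}/2\pi\mathbb{Z}$, let $(a_k)_{k\ge1},(b_k)_{k\ge1}$ be independent stationary centered Gaussian sequences with common correlation function $\rho$ ($\mathbb{E}[a_ka_l]=\mathbb{E}[b_kb_l]=\rho(k-l)$), whose spectral measure $\mu$ (defined by $\rho(k)=\frac1{2\pi}\int_{\mathbb{T}}e^{-iku}d\mu(u)$) has a continuous positive density $\psi$ with respect to Lebesgue measure on $\mathbb{T}$. Let $X_n(s)=\frac{1}{\sqrt n}\sum_{k=1}^n(a_k\cos(ks)+b_k\sin(ks))$ and $r_n(s,t)=\mathbb{E}[X_n(s)X_n(t)]$. Let $a,b\in\{0,1\}$ and $0<\alpha<1$. Then there is a constant $C$ such that for all $n\ge1$ and all $s,t\in\mathbb{T}$, \[|r_n^{(a,b)}(s,t)|\le C\,\frac{n^{a+b}}{(n\,\mathrm{dist}(s,t))^{\alpha}} .\]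
   Context: $r_n^{(a,b)}=\partial_1^a\partial_2^b r_n$. For $s,t\in\mathbb{T}$, $\mathrm{dist}(s,t)$ is the distance from $s-t$ to $2\pi\mathbb{Z}$. *)

theory Defs
  imports "HOL-Probability.Probability"
begin

text \<open>Joint Gaussianity of a family of real random variables indexed by I:
  every finite linear combination is normally distributed (possibly degenerate,
  i.e. almost surely constant).\<close>
definition gaussian_family :: "'w measure \<Rightarrow> ('i \<Rightarrow> 'w \<Rightarrow> real) \<Rightarrow> 'i set \<Rightarrow> bool" where
  "gaussian_family M X I \<longleftrightarrow>
     (\<forall>J c. finite J \<and> J \<subseteq> I \<longrightarrow>
        (\<exists>m \<sigma>. \<sigma> \<ge> 0 \<and>
           (\<sigma> = 0 \<longrightarrow> (AE \<omega> in M. (\<Sum>j\<in>J. c j * X j \<omega>) = m)) \<and>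
           (\<sigma> > 0 \<longrightarrow> distributed M lborel (\<lambda>\<omega>. \<Sum>j\<in>J. c j * X j \<omega>) (normal_density m \<sigma>))))"

definition Xn :: "(nat \<Rightarrow> 'w \<Rightarrow> real) \<Rightarrow> (nat \<Rightarrow> 'w \<Rightarrow> real) \<Rightarrow> nat \<Rightarrow> real \<Rightarrow> 'w \<Rightarrow> real" where
  "Xn a b n s \<omega> = (1 / sqrt (real n)) *
     (\<Sum>k=1..n. a k \<omega> * cos (real k * s) + b k \<omega> * sin (real k * s))"

definition rn :: "'w measure \<Rightarrow> (nat \<Rightarrow> 'w \<Rightarrow> real) \<Rightarrow> (nat \<Rightarrow> 'w \<Rightarrow> real) \<Rightarrow> nat \<Rightarrow> real \<Rightarrow> real \<Rightarrow> real" where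
  "rn M a b n s t = integral\<^sup>L M (\<lambda>\<omega>. Xn a b n s \<omega> * Xn a b n t \<omega>)"

definition rnd :: "'w measure \<Rightarrow> (nat \<Rightarrow> 'w \<Rightarrow> real) \<Rightarrow> (nat \<Rightarrow> 'w \<Rightarrow> real) \<Rightarrow> nat \<Rightarrow> nat \<Rightarrow> nat \<Rightarrow> real \<Rightarrow> real \<Rightarrow> real" where
  "rnd M a b p q n s t = ((deriv ^^ p) (\<lambda>x. ((deriv ^^ q) (\<lambda>y. rn M a b n x y)) t)) s"

definition tdist :: "real \<Rightarrow> real \<Rightarrow> real" where
  "tdist s t = (INF k::int. \<bar>s - t - 2 * pi * real_of_int k\<bar>)"

end

theory Submission
  imports Defs
begin

text \<open>
  By independence, \<open>r_n(x,y) = (1/n) sum_{k,l} rho(k-l) cos(kx - ly)\<close> is a trigonometric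
  polynomial, so its mixed derivatives are explicit, and the spectral representation of \<open>rho\<close> turns
  them into \<open>Re(i^p (-i)^q (2 pi n)^{-1} integral psi(u) K_p(s-u) K_q(u-t) du)\<close> with the kernels
  \<open>K_p(v) = sum_{k=1..n} k^p e^{ikv}\<close>. Abel summation against geometric sums bounds \<open>|K_p(v)|\<close>
  by \<open>24 n^p E(|v|)\<close>, where \<open>|v|\<close> is the distance to \<open>2 pi Z\<close> and \<open>E(r) = n/(1+nr)\<close>.
  Since \<open>|s-u| + |u-t| >= d = |s-t|\<close>, the larger of the two distances is at least \<open>d/2\<close>, so
  \<open>E(|s-u|) E(|u-t|) <= E(d/2)^alpha (E(|s-u|)^(2-alpha) + E(|u-t|)^(2-alpha))\<close>. As
  \<open>2 - alpha > 1\<close>, the integral of \<open>E^(2-alpha)\<close> over a period is \<open>O(n^(1-alpha))\<close>, while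
  \<open>E(d/2) <= 2/d\<close>; altogether \<open>|r_n^(p,q)(s,t)| <= C n^(p+q-1) d^-alpha n^(1-alpha)\<close>.
\<close>

section \<open>The distance on the circle\<close>

lemma tdist_eqI:
  assumes "\<bar>s - t - 2 * pi * of_int j\<bar> \<le> pi"
  shows "tdist s t = \<bar>s - t - 2 * pi * of_int j\<bar>"
  unfolding tdist_def
proof (rule cInf_eq_minimum)
  fix y assume "y \<in> range (\<lambda>k::int. \<bar>s - t - 2 * pi * of_int k\<bar>)"
  then obtain k :: int where y: "y = \<bar>s - t - 2 * pi * of_int k\<bar>" by blast
  show "\<bar>s - t - 2 * pi * of_int j\<bar> \<le> y"
  proof (cases "k = j")
    case False
    then have "1 \<le> \<bar>of_int k - of_int j :: real\<bar>" by linarith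
    then have "2 * pi \<le> \<bar>2 * pi * (of_int k - of_int j)\<bar>" by (simp add: abs_mult)
    then show ?thesis using assms by (simp add: y algebra_simps)
  qed (simp add: y)
qed simp

lemma tdist_attained: "\<exists>j::int. \<bar>s - t - 2 * pi * of_int j\<bar> \<le> pi \<and> tdist s t = \<bar>s - t - 2 * pi * of_int j\<bar>"
proof -
  define j where "j = \<lfloor>(s - t) / (2 * pi) + 1/2\<rfloor>"
  have "of_int j \<le> (s - t) / (2 * pi) + 1/2" "(s - t) / (2 * pi) + 1/2 < of_int j + 1"
    unfolding j_def by linarith+
  then have "\<bar>s - t - 2 * pi * of_int j\<bar> \<le> pi"
    by (simp add: field_simps abs_le_iff)
  then show ?thesis using tdist_eqI by blast
qed

lemma tdist_nonneg: "0 \<le> tdist s t"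
  using tdist_attained[of s t] by auto

lemma tdist_le: "tdist s t \<le> \<bar>s - t - 2 * pi * of_int k\<bar>"
  unfolding tdist_def by (rule cINF_lower) (auto intro: bdd_belowI[of _ 0])

lemma tdist_commute: "tdist t s = tdist s t"
proof -
  obtain j where j: "\<bar>s - t - 2 * pi * of_int j\<bar> \<le> pi" "tdist s t = \<bar>s - t - 2 * pi * of_int j\<bar>"
    using tdist_attained by blast
  have "\<bar>t - s - 2 * pi * of_int (- j)\<bar> = \<bar>s - t - 2 * pi * of_int j\<bar>" by simp
  then show ?thesis using j tdist_eqI[of t s "- j"] by simp
qed

lemma tdist_triangle: "tdist s t \<le> tdist s u + tdist u t"
proof -
  obtain j where j: "tdist s u = \<bar>s - u - 2 * pi * of_int j\<bar>" using tdist_attained by blast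
  obtain k where k: "tdist u t = \<bar>u - t - 2 * pi * of_int k\<bar>" using tdist_attained by blast
  have "tdist s t \<le> \<bar>(s - u - 2 * pi * of_int j) + (u - t - 2 * pi * of_int k)\<bar>"
    using tdist_le[of s t "j + k"] by (simp add: algebra_simps)
  then show ?thesis unfolding j k by linarith
qed

lemma continuous_on_tdist: "continuous_on A (tdist x)"
proof (rule lipschitz_on_continuous_on[of 1], rule lipschitz_onI)
  fix u v
  have "tdist x u \<le> tdist x v + tdist v u" "tdist x v \<le> tdist x u + tdist u v"
    by (rule tdist_triangle)+
  moreover have "tdist v u \<le> \<bar>u - v\<bar>" "tdist u v \<le> \<bar>u - v\<bar>"
    using tdist_le[of v u 0] tdist_le[of u v 0] by simp_all
  ultimately show "dist (tdist x u) (tdist x v) \<le> 1 * dist u v"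
    by (simp add: dist_real_def abs_le_iff)
qed simp

lemma tdist_eq_abs_shift:
  assumes "u \<in> {0..2*pi}"
  shows "\<exists>j\<in>{\<lceil>(x - 3 * pi) / (2 * pi)\<rceil>..\<lceil>(x - 3 * pi) / (2 * pi)\<rceil> + 2}. tdist x u = \<bar>x - 2 * pi * of_int j - u\<bar>"
proof -
  define m where "m = \<lceil>(x - 3 * pi) / (2 * pi)\<rceil>"
  obtain j where j: "\<bar>x - u - 2 * pi * of_int j\<bar> \<le> pi" "tdist x u = \<bar>x - u - 2 * pi * of_int j\<bar>"
    using tdist_attained by blast
  have "x - 3 * pi \<le> 2 * pi * of_int j" "2 * pi * of_int j \<le> x + pi" using j(1) assms by auto
  then have "(x - 3 * pi) / (2 * pi) \<le> of_int j" "of_int j \<le> (x - 3 * pi) / (2 * pi) + 2"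
    by (simp_all add: field_simps)
  then have "j \<in> {m..m + 2}"
    unfolding m_def using le_of_int_ceiling[of "(x - 3 * pi) / (2 * pi)"] by (auto simp: ceiling_le_iff) linarith
  with j(2) show ?thesis by (auto simp: m_def algebra_simps)
qed

section \<open>The covariance as a trigonometric polynomial\<close>

lemma integrable_mult_of_square_integrable:
  fixes f g :: "'a \<Rightarrow> real"
  assumes [measurable]: "f \<in> borel_measurable M" "g \<in> borel_measurable M"
    and "integrable M (\<lambda>x. (f x)\<^sup>2)" "integrable M (\<lambda>x. (g x)\<^sup>2)"
  shows "integrable M (\<lambda>x. f x * g x)"
proof (rule Bochner_Integration.integrable_bound)
  show "integrable M (\<lambda>x. (f x)\<^sup>2 + (g x)\<^sup>2)" using assms by auto
  show "AE x in M. norm (f x * g x) \<le> norm ((f x)\<^sup>2 + (g x)\<^sup>2)"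
  proof (rule AE_I2)
    fix x
    have "\<bar>f x * g x\<bar> \<le> (f x)\<^sup>2 + (g x)\<^sup>2"
      using sum_squares_bound[of "f x" "g x"] sum_squares_bound[of "- f x" "g x"] by (simp add: abs_le_iff)
    then show "norm (f x * g x) \<le> norm ((f x)\<^sup>2 + (g x)\<^sup>2)" by simp
  qed
qed measurable

lemma (in prob_space) indep_var_components:
  assumes "indep_var (Pi\<^sub>M I (\<lambda>_. borel)) (\<lambda>\<omega>. \<lambda>k\<in>I. X k \<omega>) (Pi\<^sub>M J (\<lambda>_. borel)) (\<lambda>\<omega>. \<lambda>k\<in>J. Y k \<omega>)"
    and "i \<in> I" "j \<in> J"
  shows "indep_var borel (X i) borel (Y j)"
proof -
  have "indep_var borel ((\<lambda>f. f i) \<circ> (\<lambda>\<omega>. \<lambda>k\<in>I. X k \<omega>)) borel ((\<lambda>f. f j) \<circ> (\<lambda>\<omega>. \<lambda>k\<in>J. Y k \<omega>))"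
    by (rule indep_var_compose[OF assms(1)]) (use assms(2,3) in auto)
  moreover have "(\<lambda>f. f i) \<circ> (\<lambda>\<omega>. \<lambda>k\<in>I. X k \<omega>) = X i" "(\<lambda>f. f j) \<circ> (\<lambda>\<omega>. \<lambda>k\<in>J. Y k \<omega>) = Y j"
    using assms(2,3) by (auto simp: fun_eq_iff)
  ultimately show ?thesis by simp
qed

lemma integral_rotated_pair:
  fixes A B A' B' :: "'w \<Rightarrow> real"
  assumes int: "integrable M (\<lambda>\<omega>. A \<omega> * A' \<omega>)" "integrable M (\<lambda>\<omega>. A \<omega> * B' \<omega>)"
      "integrable M (\<lambda>\<omega>. B \<omega> * A' \<omega>)" "integrable M (\<lambda>\<omega>. B \<omega> * B' \<omega>)"
    and cov: "integral\<^sup>L M (\<lambda>\<omega>. A \<omega> * A' \<omega>) = r" "integral\<^sup>L M (\<lambda>\<omega>. B \<omega> * B' \<omega>) = r"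
      "integral\<^sup>L M (\<lambda>\<omega>. A \<omega> * B' \<omega>) = 0" "integral\<^sup>L M (\<lambda>\<omega>. B \<omega> * A' \<omega>) = 0"
  shows "integrable M (\<lambda>\<omega>. (A \<omega> * cos \<theta> + B \<omega> * sin \<theta>) * (A' \<omega> * cos \<theta>' + B' \<omega> * sin \<theta>'))"
    and "integral\<^sup>L M (\<lambda>\<omega>. (A \<omega> * cos \<theta> + B \<omega> * sin \<theta>) * (A' \<omega> * cos \<theta>' + B' \<omega> * sin \<theta>')) = r * cos (\<theta> - \<theta>')"
proof -
  have expand: "(\<lambda>\<omega>. (A \<omega> * cos \<theta> + B \<omega> * sin \<theta>) * (A' \<omega> * cos \<theta>' + B' \<omega> * sin \<theta>')) =
      (\<lambda>\<omega>. cos \<theta> * cos \<theta>' * (A \<omega> * A' \<omega>) + cos \<theta> * sin \<theta>' * (A \<omega> * B' \<omega>)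
         + sin \<theta> * cos \<theta>' * (B \<omega> * A' \<omega>) + sin \<theta> * sin \<theta>' * (B \<omega> * B' \<omega>))"
    by (simp add: fun_eq_iff algebra_simps)
  show "integrable M (\<lambda>\<omega>. (A \<omega> * cos \<theta> + B \<omega> * sin \<theta>) * (A' \<omega> * cos \<theta>' + B' \<omega> * sin \<theta>'))"
    unfolding expand using int by simp
  show "integral\<^sup>L M (\<lambda>\<omega>. (A \<omega> * cos \<theta> + B \<omega> * sin \<theta>) * (A' \<omega> * cos \<theta>' + B' \<omega> * sin \<theta>')) = r * cos (\<theta> - \<theta>')"
    unfolding expand using int cov by (simp add: cos_diff distrib_left mult.commute)
qed

lemma rn_eq_cos_sum:
  fixes M :: "'w measure" and a b :: "nat \<Rightarrow> 'w \<Rightarrow> real" and \<rho> :: "int \<Rightarrow> real"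
  assumes "prob_space M"
    and ma: "\<forall>k\<ge>1. a k \<in> borel_measurable M" and mb: "\<forall>k\<ge>1. b k \<in> borel_measurable M"
    and ia: "\<forall>k\<ge>1. integrable M (\<lambda>\<omega>. (a k \<omega>)\<^sup>2)"
    and ib: "\<forall>k\<ge>1. integrable M (\<lambda>\<omega>. (b k \<omega>)\<^sup>2)"
    and ca: "\<forall>k\<ge>1. integral\<^sup>L M (a k) = 0"
    and cova: "\<forall>k\<ge>1. \<forall>l\<ge>1. integral\<^sup>L M (\<lambda>\<omega>. a k \<omega> * a l \<omega>) = \<rho> (int k - int l)"
    and covb: "\<forall>k\<ge>1. \<forall>l\<ge>1. integral\<^sup>L M (\<lambda>\<omega>. b k \<omega> * b l \<omega>) = \<rho> (int k - int l)"
    and indep: "prob_space.indep_var M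
        (Pi\<^sub>M {1..} (\<lambda>_. borel)) (\<lambda>\<omega>. \<lambda>k\<in>{1..}. a k \<omega>)
        (Pi\<^sub>M {1..} (\<lambda>_. borel)) (\<lambda>\<omega>. \<lambda>k\<in>{1..}. b k \<omega>)"
  shows "rn M a b n x y = (1 / real n) * (\<Sum>k=1..n. \<Sum>l=1..n. \<rho> (int k - int l) * cos (real k * x - real l * y))"
proof -
  interpret prob_space M by fact
  define Z where "Z s k \<omega> = a k \<omega> * cos (real k * s) + b k \<omega> * sin (real k * s)" for s k \<omega>
  define L2 where "L2 (X :: 'w \<Rightarrow> real) \<longleftrightarrow> X \<in> borel_measurable M \<and> integrable M (\<lambda>\<omega>. (X \<omega>)\<^sup>2)" for X
  have L2: "L2 (a k)" "L2 (b k)" if "k \<ge> 1" for k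
    using that ma mb ia ib by (auto simp: L2_def)
  have int_prod: "integrable M (\<lambda>\<omega>. X \<omega> * Y \<omega>)" if "L2 X" "L2 Y" for X Y
    using that by (auto simp: L2_def intro!: integrable_mult_of_square_integrable)
  have int_single: "integrable M X" if "L2 X" for X
    using that by (auto simp: L2_def intro!: square_integrable_imp_integrable)
  have uncorrelated: "integral\<^sup>L M (\<lambda>\<omega>. a k \<omega> * b l \<omega>) = 0" "integral\<^sup>L M (\<lambda>\<omega>. b l \<omega> * a k \<omega>) = 0"
    if "k \<ge> 1" "l \<ge> 1" for k l
    using indep_var_lebesgue_integral[OF indep_var_components[OF indep] int_single[OF L2(1)] int_single[OF L2(2)]] that ca
    by (simp_all add: mult.commute)
  have moment: "integrable M (\<lambda>\<omega>. Z x k \<omega> * Z y l \<omega>) \<and>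
      integral\<^sup>L M (\<lambda>\<omega>. Z x k \<omega> * Z y l \<omega>) = \<rho> (int k - int l) * cos (real k * x - real l * y)"
    if "k \<ge> 1" "l \<ge> 1" for k l
    unfolding Z_def using that cova covb uncorrelated[of k l] uncorrelated[of l k]
    by (intro conjI integral_rotated_pair int_prod L2) auto
  have "Xn a b n x \<omega> * Xn a b n y \<omega> = (1 / real n) * (\<Sum>k=1..n. \<Sum>l=1..n. Z x k \<omega> * Z y l \<omega>)" for \<omega>
    unfolding Xn_def Z_def[symmetric] sum_product[symmetric] by simp
  moreover have "integral\<^sup>L M (\<lambda>\<omega>. \<Sum>k=1..n. \<Sum>l=1..n. Z x k \<omega> * Z y l \<omega>) =
      (\<Sum>k=1..n. \<Sum>l=1..n. integral\<^sup>L M (\<lambda>\<omega>. Z x k \<omega> * Z y l \<omega>))"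
  proof -
    have integrable_moment: "integrable M (\<lambda>\<omega>. Z x k \<omega> * Z y l \<omega>)" if "k \<in> {1..n}" "l \<in> {1..n}" for k l
      using moment that by simp
    show ?thesis
      by (subst Bochner_Integration.integral_sum)
        (auto intro!: integrable_sum integrable_moment sum.cong Bochner_Integration.integral_sum)
  qed
  ultimately show ?thesis
    unfolding rn_def using moment by (auto intro!: sum.cong)
qed

section \<open>Derivatives and spectral representation\<close>

lemma has_field_derivative_Re_exp_sum:
  fixes c :: "'a \<Rightarrow> complex" and \<omega> :: "'a \<Rightarrow> real"
  shows "((\<lambda>x. Re (\<Sum>j\<in>J. c j * iexp (\<omega> j * x))) has_field_derivative
           Re (\<Sum>j\<in>J. \<i> * of_real (\<omega> j) * c j * iexp (\<omega> j * x))) (at x)"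
proof -
  have "((\<lambda>z. \<Sum>j\<in>J. c j * exp (\<i> * of_real (\<omega> j) * z)) has_field_derivative
           (\<Sum>j\<in>J. \<i> * of_real (\<omega> j) * c j * exp (\<i> * of_real (\<omega> j) * of_real x))) (at (of_real x))"
    by (auto intro!: derivative_eq_intros DERIV_sum simp: algebra_simps)
  from has_field_derivative_Re[OF has_vector_derivative_real_field[OF this]]
  show ?thesis by (simp add: mult.assoc)
qed

lemma funpow_deriv_Re_exp_sum:
  fixes c :: "'a \<Rightarrow> complex" and \<omega> :: "'a \<Rightarrow> real"
  shows "(deriv ^^ p) (\<lambda>x. Re (\<Sum>j\<in>J. c j * iexp (\<omega> j * x))) =
           (\<lambda>x. Re (\<Sum>j\<in>J. (\<i> * of_real (\<omega> j)) ^ p * c j * iexp (\<omega> j * x)))"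
proof (induction p)
  case (Suc p)
  have D: "deriv (\<lambda>x. Re (\<Sum>j\<in>J. ((\<i> * of_real (\<omega> j)) ^ p * c j) * iexp (\<omega> j * x))) x =
          Re (\<Sum>j\<in>J. (\<i> * of_real (\<omega> j)) ^ Suc p * c j * iexp (\<omega> j * x))" for x
    by (rule DERIV_imp_deriv[OF has_field_derivative_Re_exp_sum, THEN trans])
      (simp add: mult_ac)
  show ?case
    unfolding funpow.simps comp_def Suc.IH by (rule ext, rule D)
qed simp

lemma funpow_deriv2_Re_exp_sum:
  fixes c :: "'a \<Rightarrow> complex" and \<omega> \<nu> :: "'a \<Rightarrow> real"
  shows "(deriv ^^ p) (\<lambda>x. (deriv ^^ q) (\<lambda>y. Re (\<Sum>j\<in>J. c j * iexp (\<omega> j * x + \<nu> j * y))) t) s =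
           Re (\<Sum>j\<in>J. (\<i> * of_real (\<omega> j)) ^ p * (\<i> * of_real (\<nu> j)) ^ q * c j * iexp (\<omega> j * s + \<nu> j * t))"
proof -
  have split: "iexp (u + v) = iexp u * iexp v" for u v
    by (simp add: distrib_left exp_add)
  have separate: "(\<lambda>y. Re (\<Sum>j\<in>J. c j * iexp (\<omega> j * x + \<nu> j * y))) =
          (\<lambda>y. Re (\<Sum>j\<in>J. (c j * iexp (\<omega> j * x)) * iexp (\<nu> j * y)))" for x
    by (simp only: split mult.assoc)
  have inner: "(deriv ^^ q) (\<lambda>y. Re (\<Sum>j\<in>J. c j * iexp (\<omega> j * x + \<nu> j * y))) t =
          Re (\<Sum>j\<in>J. ((\<i> * of_real (\<nu> j)) ^ q * c j * iexp (\<nu> j * t)) * iexp (\<omega> j * x))" for x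
    unfolding separate funpow_deriv_Re_exp_sum by (simp only: mult_ac)
  show ?thesis
    unfolding inner funpow_deriv_Re_exp_sum by (simp only: split mult_ac)
qed

definition exp_kernel :: "nat \<Rightarrow> nat \<Rightarrow> real \<Rightarrow> complex" where
  "exp_kernel n p v = (\<Sum>k=1..n. of_nat k ^ p * iexp v ^ k)"

lemma continuous_on_exp_kernel [continuous_intros]:
  "continuous_on A f \<Longrightarrow> continuous_on A (\<lambda>x. exp_kernel n p (f x))"
  unfolding exp_kernel_def by (intro continuous_intros)

lemma exp_sum_eq_spectral_integral:
  fixes \<rho> :: "int \<Rightarrow> real" and \<psi> :: "real \<Rightarrow> real"
  assumes \<psi>_cont: "continuous_on UNIV \<psi>"
    and spectral: "\<forall>k. complex_of_real (\<rho> k) =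
        (1 / (2 * pi)) * integral {0..2*pi}
          (\<lambda>u. exp (- \<i> * of_int k * complex_of_real u) * complex_of_real (\<psi> u))"
  shows "(\<Sum>(k,l)\<in>{1..n}\<times>{1..n}. of_real (\<rho> (int k - int l)) * of_nat k ^ p * of_nat l ^ q * iexp (real k * s - real l * t))
    = (1 / (2 * pi)) * integral {0..2*pi} (\<lambda>u. of_real (\<psi> u) * exp_kernel n p (s - u) * exp_kernel n q (u - t))"
proof -
  define g where "g k l u = of_real (\<psi> u) * (of_nat k ^ p * iexp (s - u) ^ k) * (of_nat l ^ q * iexp (u - t) ^ l)" for k l u
  have g_int: "g k l integrable_on {0..2*pi}" for k l
    unfolding g_def by (intro integrable_continuous_interval continuous_intros
        continuous_on_compose2[OF continuous_on_of_real continuous_on_subset[OF \<psi>_cont]]) auto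
  have coefficient: "of_real (\<rho> (int k - int l)) * of_nat k ^ p * of_nat l ^ q * iexp (real k * s - real l * t)
      = (1 / (2 * pi)) * integral {0..2*pi} (g k l)" for k l
  proof -
    have "exp (- \<i> * of_int (int k - int l) * of_real u) * of_real (\<psi> u) * (of_nat k ^ p * of_nat l ^ q * iexp (real k * s - real l * t))
        = g k l u" for u
    proof -
      have "exp (- \<i> * of_int (int k - int l) * of_real u) * iexp (real k * s - real l * t) = iexp (s - u) ^ k * iexp (u - t) ^ l"
        unfolding exp_of_nat_mult[symmetric] exp_add[symmetric] by (simp add: algebra_simps)
      then show ?thesis unfolding g_def by (simp add: algebra_simps)
    qed
    then show ?thesis
      using spectral[rule_format, of "int k - int l"]
      by (simp add: integral_mult_left[symmetric] mult.assoc del: of_int_diff)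
  qed
  have sum_g: "(\<Sum>(k,l)\<in>{1..n}\<times>{1..n}. g k l u) = of_real (\<psi> u) * exp_kernel n p (s - u) * exp_kernel n q (u - t)" for u
    unfolding g_def exp_kernel_def mult.assoc[of "of_real (\<psi> u)"] sum_product
    unfolding sum_distrib_left sum.cartesian_product[symmetric] by (simp only: mult.assoc)
  have integral_eq: "integral {0..2*pi} (\<lambda>u. of_real (\<psi> u) * exp_kernel n p (s - u) * exp_kernel n q (u - t))
      = (\<Sum>(k,l)\<in>{1..n}\<times>{1..n}. integral {0..2*pi} (g k l))"
    by (simp add: integral_sum g_int split_def flip: sum_g)
  show ?thesis
    unfolding integral_eq sum_distrib_left by (simp only: split_def coefficient)
qed

lemma rnd_eq_spectral_integral:
  fixes M :: "'w measure" and a b :: "nat \<Rightarrow> 'w \<Rightarrow> real"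
    and \<rho> :: "int \<Rightarrow> real" and \<psi> :: "real \<Rightarrow> real"
  assumes "prob_space M"
    and "\<forall>k\<ge>1. a k \<in> borel_measurable M" "\<forall>k\<ge>1. b k \<in> borel_measurable M"
    and "\<forall>k\<ge>1. integrable M (\<lambda>\<omega>. (a k \<omega>)\<^sup>2)" "\<forall>k\<ge>1. integrable M (\<lambda>\<omega>. (b k \<omega>)\<^sup>2)"
    and "\<forall>k\<ge>1. integral\<^sup>L M (a k) = 0"
    and "\<forall>k\<ge>1. \<forall>l\<ge>1. integral\<^sup>L M (\<lambda>\<omega>. a k \<omega> * a l \<omega>) = \<rho> (int k - int l)"
    and "\<forall>k\<ge>1. \<forall>l\<ge>1. integral\<^sup>L M (\<lambda>\<omega>. b k \<omega> * b l \<omega>) = \<rho> (int k - int l)"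
    and "prob_space.indep_var M
        (Pi\<^sub>M {1..} (\<lambda>_. borel)) (\<lambda>\<omega>. \<lambda>k\<in>{1..}. a k \<omega>)
        (Pi\<^sub>M {1..} (\<lambda>_. borel)) (\<lambda>\<omega>. \<lambda>k\<in>{1..}. b k \<omega>)"
    and \<psi>_cont: "continuous_on UNIV \<psi>"
    and spectral: "\<forall>k. complex_of_real (\<rho> k) =
        (1 / (2 * pi)) * integral {0..2*pi}
          (\<lambda>u. exp (- \<i> * of_int k * complex_of_real u) * complex_of_real (\<psi> u))"
  shows "rnd M a b p q n s t = Re (\<i> ^ p * (- \<i>) ^ q *
           integral {0..2*pi} (\<lambda>u. of_real (\<psi> u) * exp_kernel n p (s - u) * exp_kernel n q (u - t))) / (2 * pi * real n)"
proof -
  define J where "J = {1..n} \<times> {1..n}"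
  define c :: "nat \<times> nat \<Rightarrow> complex" where "c j = of_real (\<rho> (int (fst j) - int (snd j)) / real n)" for j
  have rn_eq: "rn M a b n x = (\<lambda>y. Re (\<Sum>j\<in>J. c j * iexp (real (fst j) * x + - real (snd j) * y)))" for x
    unfolding rn_eq_cos_sum[OF assms(1-9)] J_def c_def sum.cartesian_product
    by (simp add: fun_eq_iff Re_sum sum_distrib_left Re_exp Im_exp split_def)
  have "rnd M a b p q n s t =
      Re (\<Sum>j\<in>J. (\<i> * of_real (real (fst j))) ^ p * (\<i> * of_real (- real (snd j))) ^ q * c j *
        iexp (real (fst j) * s + - real (snd j) * t))"
    unfolding rnd_def rn_eq by (rule funpow_deriv2_Re_exp_sum)
  also have "(\<Sum>j\<in>J. (\<i> * of_real (real (fst j))) ^ p * (\<i> * of_real (- real (snd j))) ^ q * c j *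
        iexp (real (fst j) * s + - real (snd j) * t)) = \<i> ^ p * (- \<i>) ^ q * (\<Sum>(k,l)\<in>{1..n}\<times>{1..n}.
      of_real (\<rho> (int k - int l)) * of_nat k ^ p * of_nat l ^ q * iexp (real k * s - real l * t)) / of_nat n"
  proof -
    have "\<i> * complex_of_real (- real l) = (- \<i>) * of_nat l" for l by simp
    then show ?thesis
      unfolding J_def c_def sum_distrib_left sum_divide_distrib split_def
      by (intro sum.cong refl) (simp only: power_mult_distrib, simp add: field_simps)
  qed
  also have "\<dots> = \<i> ^ p * (- \<i>) ^ q *
      integral {0..2*pi} (\<lambda>u. of_real (\<psi> u) * exp_kernel n p (s - u) * exp_kernel n q (u - t)) / of_real (2 * pi * real n)"
    unfolding exp_sum_eq_spectral_integral[OF \<psi>_cont spectral] by (simp add: field_simps)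
  finally show ?thesis
    unfolding Re_divide_of_real .
qed

section \<open>Kernel estimates\<close>

lemma sum_by_parts:
  fixes a :: "nat \<Rightarrow> real" and z :: "nat \<Rightarrow> 'a::real_vector"
  shows "(\<Sum>k=1..n. a k *\<^sub>R z k) =
           a n *\<^sub>R (\<Sum>k=1..n. z k) - (\<Sum>m<n. (a (Suc m) - a m) *\<^sub>R (\<Sum>k=1..m. z k))"
proof (induction n)
  case (Suc n)
  then show ?case by (simp add: algebra_simps)
qed simp

lemma norm_sum_mono_weights_le:
  fixes a :: "nat \<Rightarrow> real" and z :: "nat \<Rightarrow> 'a::real_normed_vector"
  assumes "mono a" "0 \<le> a 0" and partial: "\<And>m. m \<le> n \<Longrightarrow> norm (\<Sum>k=1..m. z k) \<le> G"
  shows "norm (\<Sum>k=1..n. a k *\<^sub>R z k) \<le> 2 * a n * G"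
proof -
  have G: "0 \<le> G" using partial[of 0] by simp
  have step: "norm ((a (Suc m) - a m) *\<^sub>R (\<Sum>k=1..m. z k)) \<le> (a (Suc m) - a m) * G" if "m < n" for m
    using partial[of m] that monoD[OF \<open>mono a\<close>, of m "Suc m"] by (auto intro!: mult_left_mono)
  have "norm (\<Sum>k=1..n. a k *\<^sub>R z k) \<le>
      norm (a n *\<^sub>R (\<Sum>k=1..n. z k)) + norm (\<Sum>m<n. (a (Suc m) - a m) *\<^sub>R (\<Sum>k=1..m. z k))"
    unfolding sum_by_parts by (rule norm_triangle_ineq4)
  also have "\<dots> \<le> a n * G + (\<Sum>m<n. (a (Suc m) - a m) * G)"
    using partial[of n] monoD[OF \<open>mono a\<close>, of 0 n] \<open>0 \<le> a 0\<close> step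
    by (intro add_mono order_trans[OF norm_sum sum_mono]) (auto intro!: mult_left_mono)
  also have "\<dots> = (2 * a n - a 0) * G"
    using sum_lessThan_telescope[of "\<lambda>m. a m * G" n] by (simp add: left_diff_distrib)
  also have "\<dots> \<le> 2 * a n * G"
    using G \<open>0 \<le> a 0\<close> by (simp add: algebra_simps)
  finally show ?thesis .
qed

lemma norm_sum_power_le:
  fixes z :: "'a::real_normed_field"
  assumes "norm z = 1" "z \<noteq> 1"
  shows "norm (\<Sum>k=1..m. z ^ k) \<le> 2 / norm (1 - z)"
proof (cases "m = 0")
  case False
  have "norm (1 - z) * norm (\<Sum>k=1..m. z ^ k) = norm (z - z ^ Suc m)"
    using sum_gp_multiplied[of 1 m z] False by (simp add: norm_mult[symmetric])
  also have "\<dots> \<le> 2"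
    using norm_triangle_ineq4[of z "z ^ Suc m"] assms(1) by (simp add: norm_power norm_mult)
  finally show ?thesis
    using assms by (simp add: field_simps mult.commute)
qed simp

lemma sin_ge_third:
  fixes x :: real assumes "0 \<le> x" "x \<le> pi / 2" shows "x / 3 \<le> sin x"
proof (cases "x \<le> pi / 3")
  case True
  have "sin 0 - 0 / 2 \<le> sin x - x / 2"
  proof (rule DERIV_nonneg_imp_nondecreasing[OF assms(1)])
    fix y assume y: "0 \<le> y" "y \<le> x"
    have "cos (pi / 3) \<le> cos y" using y True by (intro cos_monotone_0_pi_le) auto
    then show "\<exists>d. ((\<lambda>x. sin x - x / 2) has_real_derivative d) (at y) \<and> 0 \<le> d"
      by (auto simp: cos_60 intro!: derivative_eq_intros)
  qed
  then show ?thesis using assms by simp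
next
  case False
  have "sin (pi / 3) \<le> sin x" using False assms by (intro sin_monotone_2pi_le) auto
  moreover have "4 / 3 \<le> sqrt 3" by (rule real_le_rsqrt) (simp add: power2_eq_square)
  moreover have "x / 3 \<le> 2 / 3" using assms pi_less_4 by simp
  ultimately show ?thesis by (simp add: sin_60)
qed

lemma tdist_le_norm_one_minus_iexp: "tdist s t \<le> 3 * norm (1 - iexp (s - t))"
proof -
  obtain j where j: "\<bar>s - t - 2 * pi * of_int j\<bar> \<le> pi" "tdist s t = \<bar>s - t - 2 * pi * of_int j\<bar>"
    using tdist_attained by blast
  define w where "w = s - t - 2 * pi * of_int j"
  have "iexp (s - t) = iexp w * exp ((2 * of_int j * pi) * \<i>)"
    unfolding exp_add[symmetric] by (rule arg_cong[where f = exp]) (simp add: w_def algebra_simps)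
  then have "norm (1 - iexp (s - t)) = 2 * \<bar>sin (w / 2)\<bar>"
    using dist_exp_i_1[of w] exp_integer_2pi[of "of_int j"] by (simp add: norm_minus_commute)
  moreover have w: "\<bar>w\<bar> \<le> pi" using j(1) by (simp add: w_def)
  then have "\<bar>w\<bar> / 2 / 3 \<le> sin (\<bar>w\<bar> / 2)" by (intro sin_ge_third) auto
  moreover have "sin (\<bar>w\<bar> / 2) = \<bar>sin (w / 2)\<bar>"
    using w sin_ge_zero[of "\<bar>w\<bar> / 2"] by (cases "w \<ge> 0") auto
  ultimately show ?thesis using j(2) by (simp add: w_def)
qed

text \<open>\<open>envelope n r\<close> lies between \<open>min n (1/r) / 2\<close> and \<open>min n (1/r)\<close>, the size of the kernels
  at circle distance \<open>r\<close>.\<close>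

definition envelope :: "nat \<Rightarrow> real \<Rightarrow> real" where
  "envelope n r = real n / (1 + real n * r)"

lemma envelope_pos: "1 \<le> n \<Longrightarrow> 0 \<le> r \<Longrightarrow> 0 < envelope n r"
  unfolding envelope_def by (simp add: add_pos_nonneg)

lemma envelope_antimono: "antimono_on {0..} (envelope n)"
  unfolding envelope_def
  by (intro monotone_onI divide_left_mono) (auto intro!: mult_left_mono add_pos_nonneg mult_pos_pos)

lemma envelope_le_inverse: "0 < r \<Longrightarrow> envelope n r \<le> 1 / r"
  unfolding envelope_def by (simp add: field_simps add_pos_nonneg)

lemma envelope_powr_eq:
  "1 \<le> n \<Longrightarrow> 0 \<le> r \<Longrightarrow> envelope n r powr \<beta> = real n powr \<beta> * (1 + real n * r) powr (- \<beta>)"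
  unfolding envelope_def by (simp add: powr_divide powr_minus_divide add_nonneg_nonneg)

lemma norm_exp_kernel_le:
  assumes "1 \<le> n"
  shows "norm (exp_kernel n p (s - t)) \<le> 24 * real n ^ p * envelope n (tdist s t)"
proof -
  define z where "z = iexp (s - t)"
  define r where "r = tdist s t"
  have r: "0 \<le> r" by (simp add: r_def tdist_nonneg)
  have partial: "norm (\<Sum>k=1..m. z ^ k) \<le> 12 * envelope n r" if "m \<le> n" for m
  proof (cases "real n * r \<le> 1")
    case True
    have "norm (\<Sum>k=1..m. z ^ k) \<le> real m"
      by (rule order_trans[OF norm_sum]) (simp add: z_def norm_power)
    also have "\<dots> \<le> real n" using that by simp
    also have "\<dots> \<le> 2 * envelope n r"
      using True r mult_right_mono[OF True, of "real n"] by (simp add: envelope_def field_simps add_pos_nonneg)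
    finally show ?thesis using envelope_pos[OF assms r] by simp
  next
    case False
    then have "0 < r" using r by (cases "r = 0") auto
    moreover have "r \<le> 3 * norm (1 - z)"
      unfolding r_def z_def by (rule tdist_le_norm_one_minus_iexp)
    ultimately have "0 < norm (1 - z)" by linarith
    then have "norm (\<Sum>k=1..m. z ^ k) \<le> 2 / norm (1 - z)"
      by (intro norm_sum_power_le) (auto simp: z_def)
    also have "\<dots> \<le> 6 / r"
      using \<open>0 < r\<close> \<open>r \<le> 3 * norm (1 - z)\<close> \<open>0 < norm (1 - z)\<close> by (simp add: field_simps)
    also have "\<dots> \<le> 12 * envelope n r"
      using False \<open>0 < r\<close> by (simp add: envelope_def field_simps add_pos_nonneg)
    finally show ?thesis .
  qed
  have "exp_kernel n p (s - t) = (\<Sum>k=1..n. real k ^ p *\<^sub>R z ^ k)"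
    by (simp add: exp_kernel_def scaleR_conv_of_real z_def)
  also have "norm \<dots> \<le> 2 * real n ^ p * (12 * envelope n r)"
    by (rule norm_sum_mono_weights_le) (use partial in \<open>auto intro!: monoI power_mono\<close>)
  finally show ?thesis by (simp add: r_def)
qed

lemma antimono_mult_le_powr:
  fixes f :: "real \<Rightarrow> real"
  assumes f: "antimono_on {0..} f" "\<And>x. 0 \<le> x \<Longrightarrow> 0 < f x"
    and "0 \<le> x" "0 \<le> y" "0 \<le> d" "d \<le> x + y" "0 \<le> \<alpha>" "\<alpha> \<le> 1"
  shows "f x * f y \<le> f (d / 2) powr \<alpha> * (f x powr (2 - \<alpha>) + f y powr (2 - \<alpha>))"
proof -
  have one_sided: "f x * f y \<le> f (d / 2) powr \<alpha> * f y powr (2 - \<alpha>)"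
    if "0 \<le> y" "y \<le> x" "d \<le> x + y" for x y
  proof -
    have pos: "0 < f x" "0 < f y" using f(2) that by auto
    have "f x \<le> f (d / 2)" "f x \<le> f y"
      using that \<open>0 \<le> d\<close> by (auto intro!: monotone_onD[OF f(1)])
    then have "f x powr \<alpha> * f x powr (1 - \<alpha>) \<le> f (d / 2) powr \<alpha> * f y powr (1 - \<alpha>)"
      using pos \<open>0 \<le> \<alpha>\<close> \<open>\<alpha> \<le> 1\<close> by (intro mult_mono powr_mono2) auto
    then have "f x * f y \<le> f (d / 2) powr \<alpha> * f y powr (1 - \<alpha>) * f y powr 1"
      using pos by (simp add: powr_add[symmetric])
    also have "\<dots> = f (d / 2) powr \<alpha> * f y powr (2 - \<alpha>)"
      unfolding mult.assoc by (subst powr_add[symmetric]) simp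
    finally show ?thesis .
  qed
  have "0 \<le> f (d / 2) powr \<alpha> * f z powr (2 - \<alpha>)" for z by simp
  then show ?thesis
    using one_sided[of y x] one_sided[of x y] assms(3-6)
    by (cases "y \<le> x") (auto simp: distrib_left mult.commute intro: add_increasing add_increasing2)
qed

lemma norm_exp_kernel_product_le:
  assumes "1 \<le> n" "0 \<le> \<alpha>" "\<alpha> \<le> 1"
  shows "norm (exp_kernel n p (s - u) * exp_kernel n q (u - t)) \<le>
    576 * real n ^ (p + q) * envelope n (tdist s t / 2) powr \<alpha> *
      (envelope n (tdist s u) powr (2 - \<alpha>) + envelope n (tdist t u) powr (2 - \<alpha>))"
proof -
  have env: "0 \<le> envelope n (tdist x y)" for x y
    using envelope_pos[OF assms(1) tdist_nonneg] by (rule less_imp_le)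
  have "norm (exp_kernel n p (s - u) * exp_kernel n q (u - t)) \<le>
      (24 * real n ^ p * envelope n (tdist s u)) * (24 * real n ^ q * envelope n (tdist t u))"
    unfolding norm_mult tdist_commute[of t u]
    by (intro mult_mono norm_exp_kernel_le assms) (simp_all add: env)
  also have "\<dots> = 576 * real n ^ (p + q) * (envelope n (tdist s u) * envelope n (tdist t u))"
    by (simp add: power_add)
  also have "envelope n (tdist s u) * envelope n (tdist t u) \<le>
      envelope n (tdist s t / 2) powr \<alpha> * (envelope n (tdist s u) powr (2 - \<alpha>) + envelope n (tdist t u) powr (2 - \<alpha>))"
    using tdist_triangle[of s t u] assms
    by (intro antimono_mult_le_powr envelope_antimono envelope_pos) (auto simp: tdist_nonneg tdist_commute)
  finally show ?thesis by (simp add: mult_left_mono mult.assoc)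
qed

section \<open>Integrating the envelope\<close>

lemma decay_primitive:
  fixes m \<beta> r :: real
  assumes "0 < m" "1 < \<beta>" "0 \<le> r"
  shows "((\<lambda>r. (1 - (1 + m * r) powr (1 - \<beta>)) / ((\<beta> - 1) * m)) has_real_derivative (1 + m * r) powr (- \<beta>)) (at r)"
    and "0 \<le> (1 - (1 + m * r) powr (1 - \<beta>)) / ((\<beta> - 1) * m)"
    and "(1 - (1 + m * r) powr (1 - \<beta>)) / ((\<beta> - 1) * m) \<le> 1 / ((\<beta> - 1) * m)"
proof -
  have pos: "0 < 1 + m * r" using assms by (simp add: add_pos_nonneg)
  have "((\<lambda>r. (1 - (1 + m * r) powr (1 - \<beta>)) / ((\<beta> - 1) * m)) has_real_derivative
      - ((1 - \<beta>) * (1 + m * r) powr (1 - \<beta> - 1) * m) / ((\<beta> - 1) * m)) (at r)"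
    using pos assms by (auto intro!: derivative_eq_intros)
  moreover have "- ((1 - \<beta>) * (1 + m * r) powr (1 - \<beta> - 1) * m) / ((\<beta> - 1) * m) = (1 + m * r) powr (- \<beta>)"
    using assms by (simp add: field_simps)
  ultimately show "((\<lambda>r. (1 - (1 + m * r) powr (1 - \<beta>)) / ((\<beta> - 1) * m)) has_real_derivative (1 + m * r) powr (- \<beta>)) (at r)"
    by simp
  have "(1 + m * r) powr (1 - \<beta>) \<le> 1 powr (1 - \<beta>)"
    using assms by (intro powr_mono2') auto
  then show "0 \<le> (1 - (1 + m * r) powr (1 - \<beta>)) / ((\<beta> - 1) * m)"
    and "(1 - (1 + m * r) powr (1 - \<beta>)) / ((\<beta> - 1) * m) \<le> 1 / ((\<beta> - 1) * m)"
    using assms by (simp_all add: divide_right_mono)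
qed

lemma decay_profile_antiderivative:
  fixes m \<beta> :: real
  assumes "0 < m" "1 < \<beta>"
  obtains \<Phi> where "continuous_on UNIV \<Phi>"
    and "\<And>w. w \<noteq> 0 \<Longrightarrow> (\<Phi> has_real_derivative (1 + m * \<bar>w\<bar>) powr (- \<beta>)) (at w)"
    and "\<And>w. \<bar>\<Phi> w\<bar> \<le> 1 / ((\<beta> - 1) * m)"
proof -
  define G where "G r = (1 - (1 + m * r) powr (1 - \<beta>)) / ((\<beta> - 1) * m)" for r
  define \<Phi> where "\<Phi> w = G (max w 0) - G (max (- w) 0)" for w
  note G = decay_primitive[OF assms, folded G_def]
  have \<Phi>_deriv: "(\<Phi> has_real_derivative (1 + m * \<bar>w\<bar>) powr (- \<beta>)) (at w)" if "w \<noteq> 0" for w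
  proof (cases "0 < w")
    case True
    have "((\<lambda>w. G w - G 0) has_real_derivative (1 + m * \<bar>w\<bar>) powr (- \<beta>)) (at w)"
      using G(1)[of w] True by (auto intro!: derivative_eq_intros)
    then show ?thesis
      by (rule has_field_derivative_transform_within_open[of _ _ _ "{0<..}"]) (use True in \<open>auto simp: \<Phi>_def\<close>)
  next
    case False
    then have "w < 0" using that by simp
    then have "(G has_real_derivative (1 + m * \<bar>w\<bar>) powr (- \<beta>)) (at (- w))"
      using G(1)[of "- w"] by simp
    then have "((\<lambda>w. G (- w)) has_real_derivative (1 + m * \<bar>w\<bar>) powr (- \<beta>) * (- 1)) (at w)"
      by (rule DERIV_chain2) (auto intro!: derivative_eq_intros)
    then have "((\<lambda>w. G 0 - G (- w)) has_real_derivative (1 + m * \<bar>w\<bar>) powr (- \<beta>)) (at w)"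
      using DERIV_diff[OF DERIV_const] by fastforce
    then show ?thesis
      by (rule has_field_derivative_transform_within_open[of _ _ _ "{..<0}"]) (use \<open>w < 0\<close> in \<open>auto simp: \<Phi>_def\<close>)
  qed
  have "1 + m * max y 0 \<noteq> 0" for y
    using assms by (intro order.strict_implies_not_eq[symmetric] add_pos_nonneg) auto
  then have "continuous_on UNIV \<Phi>"
    unfolding \<Phi>_def G_def using assms by (intro continuous_intros) auto
  moreover have "\<bar>\<Phi> w\<bar> \<le> 1 / ((\<beta> - 1) * m)" for w
    using G(2,3)[of "max w 0"] G(2,3)[of "max (- w) 0"] by (simp add: \<Phi>_def abs_le_iff)
  ultimately show ?thesis using that \<Phi>_deriv by blast
qed

lemma integral_decay_le:
  fixes m \<beta> a b c :: real
  assumes "0 < m" "1 < \<beta>" "a \<le> b"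
  shows "(\<lambda>u. (1 + m * \<bar>c - u\<bar>) powr (- \<beta>)) integrable_on {a..b}"
    and "integral {a..b} (\<lambda>u. (1 + m * \<bar>c - u\<bar>) powr (- \<beta>)) \<le> 2 / ((\<beta> - 1) * m)"
proof -
  obtain \<Phi> where \<Phi>_cont: "continuous_on UNIV \<Phi>"
    and \<Phi>_deriv: "\<And>w. w \<noteq> 0 \<Longrightarrow> (\<Phi> has_real_derivative (1 + m * \<bar>w\<bar>) powr (- \<beta>)) (at w)"
    and \<Phi>_bound: "\<And>w. \<bar>\<Phi> w\<bar> \<le> 1 / ((\<beta> - 1) * m)"
    using decay_profile_antiderivative[OF assms(1,2)] by blast
  have "continuous_on {a..b} (\<lambda>u. \<Phi> (u - c))"
    by (intro continuous_on_compose2[OF \<Phi>_cont] continuous_intros) auto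
  moreover have "((\<lambda>u. \<Phi> (u - c)) has_vector_derivative (1 + m * \<bar>c - u\<bar>) powr (- \<beta>)) (at u)"
    if "u \<in> {a<..<b} - {c}" for u
  proof -
    have "((\<lambda>u. \<Phi> (u - c)) has_real_derivative (1 + m * \<bar>u - c\<bar>) powr (- \<beta>) * 1) (at u)"
      using that by (intro DERIV_chain2[OF \<Phi>_deriv]) (auto intro!: derivative_eq_intros)
    then show ?thesis
      by (simp add: has_real_derivative_iff_has_vector_derivative abs_minus_commute)
  qed
  ultimately have integral: "((\<lambda>u. (1 + m * \<bar>c - u\<bar>) powr (- \<beta>)) has_integral \<Phi> (b - c) - \<Phi> (a - c)) {a..b}"
    using assms(3) by (intro fundamental_theorem_of_calculus_interior_strong[of "{c}"]) auto
  then show "(\<lambda>u. (1 + m * \<bar>c - u\<bar>) powr (- \<beta>)) integrable_on {a..b}" by blast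
  have "integral {a..b} (\<lambda>u. (1 + m * \<bar>c - u\<bar>) powr (- \<beta>)) = \<Phi> (b - c) - \<Phi> (a - c)"
    by (rule integral_unique[OF integral])
  also have "\<dots> \<le> 2 / ((\<beta> - 1) * m)"
    using \<Phi>_bound[of "b - c"] \<Phi>_bound[of "a - c"] by linarith
  finally show "integral {a..b} (\<lambda>u. (1 + m * \<bar>c - u\<bar>) powr (- \<beta>)) \<le> 2 / ((\<beta> - 1) * m)" .
qed

lemma integral_envelope_tdist_le:
  assumes "1 \<le> n" "\<alpha> < 1"
  shows "(\<lambda>u. envelope n (tdist x u) powr (2 - \<alpha>)) integrable_on {0..2*pi}"
    and "integral {0..2*pi} (\<lambda>u. envelope n (tdist x u) powr (2 - \<alpha>)) \<le> 6 * real n powr (1 - \<alpha>) / (1 - \<alpha>)"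
proof -
  define J where "J = {\<lceil>(x - 3 * pi) / (2 * pi)\<rceil>..\<lceil>(x - 3 * pi) / (2 * pi)\<rceil> + 2}"
  define h where "h j u = real n powr (2 - \<alpha>) * (1 + real n * \<bar>(x - 2 * pi * of_int j) - u\<bar>) powr (- (2 - \<alpha>))" for j u
  have n: "0 < real n" using assms by simp
  have h_int: "h j integrable_on {0..2*pi}" for j
    unfolding h_def using integral_decay_le(1)[OF n, of "2 - \<alpha>"] assms by auto
  have "1 + real n * tdist x u \<noteq> 0" for u
    using n by (intro order.strict_implies_not_eq[symmetric] add_pos_nonneg) (simp_all add: tdist_nonneg)
  then have "continuous_on {0..2*pi} (\<lambda>u. envelope n (tdist x u) powr (2 - \<alpha>))"
    unfolding envelope_def using continuous_on_tdist n by (intro continuous_intros) auto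
  then show "(\<lambda>u. envelope n (tdist x u) powr (2 - \<alpha>)) integrable_on {0..2*pi}"
    by (rule integrable_continuous_interval)
  then have "integral {0..2*pi} (\<lambda>u. envelope n (tdist x u) powr (2 - \<alpha>)) \<le> integral {0..2*pi} (\<lambda>u. \<Sum>j\<in>J. h j u)"
  proof (rule integral_le)
    show "(\<lambda>u. \<Sum>j\<in>J. h j u) integrable_on {0..2*pi}" by (intro integrable_sum h_int) (simp add: J_def)
  next
    fix u :: real assume "u \<in> {0..2*pi}"
    then obtain j where "j \<in> J" "tdist x u = \<bar>x - 2 * pi * of_int j - u\<bar>"
      unfolding J_def using tdist_eq_abs_shift by blast
    then have "envelope n (tdist x u) powr (2 - \<alpha>) = h j u"
      using assms by (simp add: h_def envelope_powr_eq)
    also have "\<dots> \<le> (\<Sum>j\<in>J. h j u)"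
      using \<open>j \<in> J\<close> by (intro member_le_sum) (auto simp: h_def J_def)
    finally show "envelope n (tdist x u) powr (2 - \<alpha>) \<le> (\<Sum>j\<in>J. h j u)" .
  qed
  also have "\<dots> = (\<Sum>j\<in>J. integral {0..2*pi} (h j))"
    by (intro integral_sum h_int) (simp add: J_def)
  also have "\<dots> \<le> (\<Sum>j\<in>J. real n powr (2 - \<alpha>) * (2 / ((2 - \<alpha> - 1) * real n)))"
    unfolding h_def integral_mult_right using assms
    by (intro sum_mono mult_left_mono integral_decay_le(2)[OF n]) auto
  also have "\<dots> = 6 * real n powr (1 - \<alpha>) / (1 - \<alpha>)"
  proof -
    have "real n powr (2 - \<alpha>) = real n * real n powr (1 - \<alpha>)"
      using powr_add[of "real n" 1 "1 - \<alpha>"] n by simp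
    then show ?thesis using n assms(2) by (simp add: J_def field_simps)
  qed
  finally show "integral {0..2*pi} (\<lambda>u. envelope n (tdist x u) powr (2 - \<alpha>)) \<le> 6 * real n powr (1 - \<alpha>) / (1 - \<alpha>)" .
qed

lemma norm_spectral_integral_le:
  fixes \<psi> :: "real \<Rightarrow> real"
  assumes n: "1 \<le> n" and \<alpha>: "0 < \<alpha>" "\<alpha> < 1" and d: "0 < tdist s t"
    and \<psi>_cont: "continuous_on {0..2*pi} \<psi>" and \<psi>_bound: "\<And>u. u \<in> {0..2*pi} \<Longrightarrow> \<bar>\<psi> u\<bar> \<le> B"
  shows "norm (integral {0..2*pi} (\<lambda>u. of_real (\<psi> u) * exp_kernel n p (s - u) * exp_kernel n q (u - t)))
      \<le> 6912 * B * real n ^ (p + q) * (2 / tdist s t) powr \<alpha> * real n powr (1 - \<alpha>) / (1 - \<alpha>)"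
proof -
  define E where "E x u = envelope n (tdist x u) powr (2 - \<alpha>)" for x u
  define c where "c = 576 * B * real n ^ (p + q) * envelope n (tdist s t / 2) powr \<alpha>"
  have B: "0 \<le> B" using \<psi>_bound[of 0] by auto
  have c: "0 \<le> c" using B by (simp add: c_def)
  note E_int = integral_envelope_tdist_le(1)[OF n \<alpha>(2), folded E_def]
  note E_le = integral_envelope_tdist_le(2)[OF n \<alpha>(2), folded E_def]
  have "norm (integral {0..2*pi} (\<lambda>u. of_real (\<psi> u) * exp_kernel n p (s - u) * exp_kernel n q (u - t)))
      \<le> integral {0..2*pi} (\<lambda>u. c * (E s u + E t u))"
  proof (rule integral_norm_bound_integral)
    show "(\<lambda>u. of_real (\<psi> u) * exp_kernel n p (s - u) * exp_kernel n q (u - t)) integrable_on {0..2*pi}"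
      by (intro integrable_continuous_interval continuous_intros continuous_on_compose2[OF continuous_on_of_real \<psi>_cont])
        auto
    show "(\<lambda>u. c * (E s u + E t u)) integrable_on {0..2*pi}"
      by (intro integrable_on_mult_right integrable_add E_int)
  next
    fix u assume "u \<in> {0..2*pi}"
    then have "norm (of_real (\<psi> u) * exp_kernel n p (s - u) * exp_kernel n q (u - t)) \<le>
        B * (576 * real n ^ (p + q) * envelope n (tdist s t / 2) powr \<alpha> * (E s u + E t u))"
      unfolding mult.assoc[of "of_real (\<psi> u)"] norm_mult[of "of_real (\<psi> u)"] norm_of_real E_def using \<alpha> n B \<psi>_bound
      by (intro mult_mono norm_exp_kernel_product_le) auto
    then show "norm (of_real (\<psi> u) * exp_kernel n p (s - u) * exp_kernel n q (u - t)) \<le> c * (E s u + E t u)"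
      by (simp add: c_def mult_ac)
  qed
  also have "\<dots> = c * (integral {0..2*pi} (E s) + integral {0..2*pi} (E t))"
    using E_int by (simp add: integral_add)
  also have "\<dots> \<le> c * (12 * real n powr (1 - \<alpha>) / (1 - \<alpha>))"
    using E_le[of s] E_le[of t] c by (intro mult_left_mono) auto
  also have "envelope n (tdist s t / 2) powr \<alpha> \<le> (2 / tdist s t) powr \<alpha>"
    using envelope_le_inverse[of "tdist s t / 2" n] envelope_pos[OF n, of "tdist s t / 2"] d \<alpha>
    by (intro powr_mono2) auto
  then have "c * (12 * real n powr (1 - \<alpha>) / (1 - \<alpha>)) \<le>
      6912 * B * real n ^ (p + q) * (2 / tdist s t) powr \<alpha> * real n powr (1 - \<alpha>) / (1 - \<alpha>)"
    unfolding c_def using B \<alpha> by (simp add: divide_right_mono mult_left_mono mult_right_mono)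
  finally show ?thesis .
qed

theorem lemma1:
  fixes M :: "'w measure" and a b :: "nat \<Rightarrow> 'w \<Rightarrow> real"
    and \<rho> :: "int \<Rightarrow> real" and \<psi> :: "real \<Rightarrow> real"
    and p q :: nat and \<alpha> :: real
  assumes "prob_space M"
    and ga: "gaussian_family M a {1..}" and gb: "gaussian_family M b {1..}"
    and ma: "\<forall>k\<ge>1. a k \<in> borel_measurable M" and mb: "\<forall>k\<ge>1. b k \<in> borel_measurable M"
    and ia: "\<forall>k\<ge>1. integrable M (\<lambda>\<omega>. (a k \<omega>)\<^sup>2)"
    and ib: "\<forall>k\<ge>1. integrable M (\<lambda>\<omega>. (b k \<omega>)\<^sup>2)"
    and ca: "\<forall>k\<ge>1. integral\<^sup>L M (a k) = 0" and cb: "\<forall>k\<ge>1. integral\<^sup>L M (b k) = 0"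
    and cova: "\<forall>k\<ge>1. \<forall>l\<ge>1. integral\<^sup>L M (\<lambda>\<omega>. a k \<omega> * a l \<omega>) = \<rho> (int k - int l)"
    and covb: "\<forall>k\<ge>1. \<forall>l\<ge>1. integral\<^sup>L M (\<lambda>\<omega>. b k \<omega> * b l \<omega>) = \<rho> (int k - int l)"
    and indep: "prob_space.indep_var M
        (Pi\<^sub>M {1..} (\<lambda>_. borel)) (\<lambda>\<omega>. \<lambda>k\<in>{1..}. a k \<omega>)
        (Pi\<^sub>M {1..} (\<lambda>_. borel)) (\<lambda>\<omega>. \<lambda>k\<in>{1..}. b k \<omega>)"
    and \<psi>_cont: "continuous_on UNIV \<psi>"
    and \<psi>_per: "\<forall>u. \<psi> (u + 2 * pi) = \<psi> u"
    and \<psi>_pos: "\<forall>u. \<psi> u > 0"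
    and spectral: "\<forall>k. complex_of_real (\<rho> k) =
        (1 / (2 * pi)) * integral {0..2*pi}
          (\<lambda>u. exp (- \<i> * of_int k * complex_of_real u) * complex_of_real (\<psi> u))"
    and "p \<le> 1" and "q \<le> 1" and "0 < \<alpha>" and "\<alpha> < 1"
  shows "\<exists>C. \<forall>n\<ge>1. \<forall>s t. tdist s t > 0 \<longrightarrow>
           \<bar>rnd M a b p q n s t\<bar> \<le> C * real n ^ (p + q) / (real n * tdist s t) powr \<alpha>"
proof -
  have \<psi>_cont': "continuous_on {0..2*pi} \<psi>" using \<psi>_cont by (rule continuous_on_subset) simp
  obtain B where B: "\<And>u. u \<in> {0..2*pi} \<Longrightarrow> \<bar>\<psi> u\<bar> \<le> B"
    using continuous_on_compact_bound[OF compact_Icc \<psi>_cont'] by auto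
  define C where "C = 6912 * B * 2 powr \<alpha> / (2 * pi * (1 - \<alpha>))"
  show ?thesis
  proof (intro exI[of _ C] allI impI)
    fix n :: nat and s t :: real assume n: "1 \<le> n" and d: "0 < tdist s t"
    define I where "I = integral {0..2*pi} (\<lambda>u. of_real (\<psi> u) * exp_kernel n p (s - u) * exp_kernel n q (u - t))"
    have "norm (\<i> ^ p * (- \<i>) ^ q * I) = norm I" by (simp add: norm_mult norm_power)
    then have "\<bar>Re (\<i> ^ p * (- \<i>) ^ q * I)\<bar> \<le> norm I" by (metis abs_Re_le_cmod)
    then have "\<bar>rnd M a b p q n s t\<bar> \<le> norm I / (2 * pi * real n)"
      unfolding rnd_eq_spectral_integral[OF assms(1,4-8,10-12) \<psi>_cont spectral] I_def[symmetric] abs_divide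
      using n by (subst abs_of_pos) (auto intro!: divide_right_mono)
    also have "\<dots> \<le> 6912 * B * real n ^ (p + q) * (2 / tdist s t) powr \<alpha> * real n powr (1 - \<alpha>) / (1 - \<alpha>) / (2 * pi * real n)"
      unfolding I_def using \<open>0 < \<alpha>\<close> \<open>\<alpha> < 1\<close> by (intro divide_right_mono norm_spectral_integral_le n d \<psi>_cont' B) auto
    also have "\<dots> = C * real n ^ (p + q) / (real n * tdist s t) powr \<alpha>"
      using n d \<open>\<alpha> < 1\<close> by (simp add: C_def powr_divide powr_mult powr_diff field_simps)
    finally show "\<bar>rnd M a b p q n s t\<bar> \<le> C * real n ^ (p + q) / (real n * tdist s t) powr \<alpha>" .
  qed
qed

end
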